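(* For every $n\geq 2$, letting $P_n$ denote the path with $n$ edges (and $n+1$ vertices), ${\rm ML}^{\rm W}(P_n)=0$ if $n=2$; ${\rm ML}^{\rm W}(P_n)=1$ if $n=3$; ${\rm ML}^{\rm W}(P_n)=2$ if $n\in\{4,5\}$; and ${\rm ML}^{\rm W}(P_n)=2n-10$ otherwise.
   Context: A walk of a graph $G$ is a sequence of vertices $u_0u_1\dots u_p$ with $u_tu_{t+1}\in E(G)$ for all $t$ (vertices and edges may repeat); its length is $p$. For a walk $W$ of $G$, $G+W$ is the multigraph on $V(G)$ whose edge multiset consists of $E(G)$ together with each edge added as many times as $W$ traverses it. A multigraph is locally irregular if no two adjacent vertices have the same degree; a walk is irregularising if $G+W$ is locally irregular. ${\rm ML}^{\rm W}(G)$ denotes the minimum length of an irregularising walk of $G$, where the trivial walk consisting of a single vertex (length $0$) is allowed. *)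

theory Defs
  imports Main
begin

text \<open>Simple graphs: finite vertex set V and symmetric irreflexive adjacency E on V.
  A walk is a nonempty list of vertices u_0 ... u_p with consecutive vertices adjacent;
  its length is p = length - 1.\<close>

definition is_walk :: "'a set \<Rightarrow> ('a \<Rightarrow> 'a \<Rightarrow> bool) \<Rightarrow> 'a list \<Rightarrow> bool" where
  "is_walk V E w \<longleftrightarrow> w \<noteq> [] \<and> set w \<subseteq> V \<and>
     (\<forall>t. Suc t < length w \<longrightarrow> E (w ! t) (w ! Suc t))"

definition walk_length :: "'a list \<Rightarrow> nat" where
  "walk_length w = length w - 1"

definition deg :: "'a set \<Rightarrow> ('a \<Rightarrow> 'a \<Rightarrow> bool) \<Rightarrow> 'a \<Rightarrow> nat" where
  "deg V E v = card {u \<in> V. E v u}"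

text \<open>Number of traversals by the walk w of edges incident to v
  (each traversal of an edge uv adds one copy of uv in G+W).\<close>
definition walk_incidences :: "'a list \<Rightarrow> 'a \<Rightarrow> nat" where
  "walk_incidences w v = card {t. Suc t < length w \<and> (w ! t = v \<or> w ! Suc t = v)}"

definition deg_plus :: "'a set \<Rightarrow> ('a \<Rightarrow> 'a \<Rightarrow> bool) \<Rightarrow> 'a list \<Rightarrow> 'a \<Rightarrow> nat" where
  "deg_plus V E w v = deg V E v + walk_incidences w v"

text \<open>G+W is locally irregular (adjacency in G+W coincides with adjacency in G).\<close>
definition irregularising :: "'a set \<Rightarrow> ('a \<Rightarrow> 'a \<Rightarrow> bool) \<Rightarrow> 'a list \<Rightarrow> bool" where
  "irregularising V E w \<longleftrightarrow> is_walk V E w \<and>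
     (\<forall>u\<in>V. \<forall>v\<in>V. E u v \<longrightarrow> deg_plus V E w u \<noteq> deg_plus V E w v)"

definition min_irreg_walk_length :: "'a set \<Rightarrow> ('a \<Rightarrow> 'a \<Rightarrow> bool) \<Rightarrow> nat" where
  "min_irreg_walk_length V E = (LEAST p. \<exists>w. irregularising V E w \<and> walk_length w = p)"

definition path_V :: "nat \<Rightarrow> nat set" where
  "path_V n = {0..n}"

definition path_E :: "nat \<Rightarrow> nat \<Rightarrow> nat \<Rightarrow> bool" where
  "path_E n u v \<longleftrightarrow> u \<le> n \<and> v \<le> n \<and> (v = Suc u \<or> u = Suc v)"

end

theory Submission
  imports Defs
begin

(*
  Index the edge {i - 1, i} of P_n by i and let m i count how often the walk W traverses it.
  A vertex v then has degree d v + m v + m (v + 1) in P_n + W, where d v is its degree in P_n,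
  so P_n + W is locally irregular iff d v + m v differs from d (v + 1) + m (v + 2) for all v < n,
  and the length of W is the sum of the m i.

  Lower bound: counts of interior edges at distance two differ.  An edge among 3 .. n - 2 that
  W never crosses confines W to one side, leaving an edge at distance two untraversed as well,
  so all these counts are positive.  The parity of m v + m (v + 1) is that of the number of
  steps of W at v, which is odd only at the two ends of W; hence the odd counts form an
  interval, on which pairing edges at distance two loses at most 2 against twice its length.
  All other counts on 3 .. n - 2 are even and positive, so the length is at least
  2 (n - 4) - 2 = 2 n - 10.

  Upper bound: a walk zigzagging up the path in rounds of eight steps yields the counts
  1, 1, 3, 3, 1, 1, 3, 3, 1, 1, ..., which is corrected at the two ends according to n mod 4.
*)

definition unit_step :: "nat \<Rightarrow> nat \<Rightarrow> bool" where
  "unit_step a b \<longleftrightarrow> Suc a = b \<or> Suc b = a"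

lemma is_walk_path_iff:
  "is_walk (path_V n) (path_E n) w \<longleftrightarrow> w \<noteq> [] \<and> set w \<subseteq> {..n} \<and> successively unit_step w"
proof -
  have "successively (path_E n) w \<longleftrightarrow> successively unit_step w" if "set w \<subseteq> {..n}"
    using that by (intro successively_cong) (auto simp: path_E_def unit_step_def)
  then show ?thesis
    unfolding is_walk_def path_V_def successively_conv_nth[symmetric] by (auto simp: atLeast0AtMost)
qed

lemma walk_incidences_Nil [simp]: "walk_incidences [] v = 0"
  and walk_incidences_singleton [simp]: "walk_incidences [a] v = 0"
  by (simp_all add: walk_incidences_def)

lemma walk_incidences_conv_length_filter:
  "walk_incidences w v = length (filter (\<lambda>(a, b). a = v \<or> b = v) (zip w (tl w)))"
  unfolding walk_incidences_def length_filter_conv_card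
  by (rule arg_cong[where f = card]) (auto simp: nth_tl)

lemma walk_incidences_Cons_Cons [simp]:
  "walk_incidences (a # b # r) v = of_bool (a = v \<or> b = v) + walk_incidences (b # r) v"
  by (simp add: walk_incidences_conv_length_filter)

lemma walk_incidences_handshake:
  assumes "successively (\<noteq>) w" "w \<noteq> []"
  shows "walk_incidences w v + of_bool (hd w = v) + of_bool (last w = v) = 2 * count_list w v"
  using assms by (induction w rule: induct_list012) auto

lemma walk_incidences_odd_imp_end:
  assumes "successively (\<noteq>) w" "w \<noteq> []" "odd (walk_incidences w v)"
  shows "v = hd w \<or> v = last w"
  using walk_incidences_handshake[OF assms(1,2), of v] assms(3)
  by (cases "v = hd w"; cases "v = last w") auto

(* Steps of w along the path edge {i - 1, i}; the index 0 names no edge. *)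
fun edge_traversals :: "nat list \<Rightarrow> nat \<Rightarrow> nat" where
  "edge_traversals (a # b # r) i =
    of_bool (unit_step a b \<and> max a b = i) + edge_traversals (b # r) i"
| "edge_traversals _ i = 0"

lemma edge_traversals_0 [simp]: "edge_traversals w 0 = 0"
  by (induction w "0::nat" rule: edge_traversals.induct) (auto simp: unit_step_def)

lemma edge_traversals_append:
  "xs \<noteq> [] \<Longrightarrow> edge_traversals (xs @ ys) i = edge_traversals xs i + edge_traversals (last xs # ys) i"
  by (induction xs i rule: edge_traversals.induct) auto

lemma edge_traversals_Cons:
  "w \<noteq> [] \<Longrightarrow>
    edge_traversals (a # w) i = of_bool (unit_step a (hd w) \<and> max a (hd w) = i) + edge_traversals w i"
  by (cases w) auto

lemma walk_incidences_eq_edge_traversals: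
  "successively unit_step w \<Longrightarrow> walk_incidences w v = edge_traversals w v + edge_traversals w (Suc v)"
  by (induction w v rule: edge_traversals.induct) (auto simp: unit_step_def)

lemma sum_edge_traversals:
  "successively unit_step w \<Longrightarrow> set w \<subseteq> {..n} \<Longrightarrow> (\<Sum>i=1..n. edge_traversals w i) = length w - 1"
proof (induction w rule: induct_list012)
  case (3 a b r)
  have "(\<Sum>i=1..n. of_bool (unit_step a b \<and> max a b = i)) = (1::nat)"
    using 3(3,4) by (auto simp: unit_step_def max_def)
  then show ?case
    using 3 by (simp add: sum.distrib)
qed auto

lemma edge_traversals_pos_imp_mem:
  "0 < edge_traversals w i \<Longrightarrow> i - 1 \<in> set w \<and> i \<in> set w"
  by (induction w i rule: edge_traversals.induct) (auto simp: unit_step_def split: if_splits)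

lemma edge_traversals_eq_0_imp_one_side:
  assumes "successively unit_step w" "edge_traversals w i = 0"
  shows "set w \<subseteq> {..<i} \<or> set w \<subseteq> {i..}"
  using assms by (induction w rule: induct_list012) (auto simp: unit_step_def)

lemma deg_path:
  assumes "2 \<le> n" "v \<le> n"
  shows "deg (path_V n) (path_E n) v = (if v = 0 \<or> v = n then 1 else 2)"
proof -
  have "{u \<in> path_V n. path_E n v u} =
      (if v = 0 then {1} else if v = n then {v - 1} else {v - 1, v + 1})"
    using assms by (auto simp: path_V_def path_E_def)
  then show ?thesis
    using assms by (simp add: deg_def)
qed

(* Adding m i copies of the edge {i - 1, i} to P_n gives a locally irregular multigraph;
   the count of the edge {v, v + 1} itself cancels. *)
definition irregular_edge_counts :: "nat \<Rightarrow> (nat \<Rightarrow> nat) \<Rightarrow> bool" where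
  "irregular_edge_counts n m \<longleftrightarrow>
     (\<forall>v<n. deg (path_V n) (path_E n) v + m v \<noteq>
             deg (path_V n) (path_E n) (Suc v) + m (Suc (Suc v)))"

lemma path_adjacent_neq_iff:
  "(\<forall>u\<in>path_V n. \<forall>v\<in>path_V n. path_E n u v \<longrightarrow> f u \<noteq> f v) \<longleftrightarrow> (\<forall>v<n. f v \<noteq> f (Suc v))"
proof (intro iffI allI impI ballI)
  fix v
  assume neq: "\<forall>u\<in>path_V n. \<forall>v\<in>path_V n. path_E n u v \<longrightarrow> f u \<noteq> f v" and "v < n"
  then have "v \<in> path_V n" "Suc v \<in> path_V n" "path_E n v (Suc v)"
    by (simp_all add: path_V_def path_E_def)
  with neq show "f v \<noteq> f (Suc v)"
    by blast
next
  fix u v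
  assume "\<forall>v<n. f v \<noteq> f (Suc v)" "path_E n u v"
  then show "f u \<noteq> f v"
    unfolding path_E_def by (metis Suc_le_lessD)
qed

lemma irregularising_path_iff:
  "irregularising (path_V n) (path_E n) w \<longleftrightarrow>
    is_walk (path_V n) (path_E n) w \<and> irregular_edge_counts n (edge_traversals w)"
proof (cases "is_walk (path_V n) (path_E n) w")
  case True
  then have "deg_plus (path_V n) (path_E n) w v =
      deg (path_V n) (path_E n) v + edge_traversals w v + edge_traversals w (Suc v)" for v
    by (simp add: deg_plus_def walk_incidences_eq_edge_traversals is_walk_path_iff)
  then show ?thesis
    unfolding irregularising_def irregular_edge_counts_def path_adjacent_neq_iff by simp
qed (simp add: irregularising_def)

lemma irregularising_pathI:
  assumes "w \<noteq> []" "set w \<subseteq> {..n}" "successively unit_step w"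
    and "edge_traversals w = m" "irregular_edge_counts n m"
  shows "irregularising (path_V n) (path_E n) w"
  using assms by (simp add: irregularising_path_iff is_walk_path_iff)

lemma exists_flip_between:
  "a < b \<Longrightarrow> P a \<noteq> P b \<Longrightarrow> \<exists>v. a \<le> v \<and> v < b \<and> P v \<noteq> P (Suc v)"
proof (induction b)
  case (Suc b)
  then show ?case
    by (cases "a < b \<and> P a \<noteq> P b") (auto simp: less_Suc_eq intro: exI[of _ b])
qed simp

lemma sum_odd_alternating_ge:
  fixes m :: "nat \<Rightarrow> nat"
  assumes "\<And>j. p \<le> j \<Longrightarrow> j < p + L \<Longrightarrow> odd (m j)"
    and "\<And>j. p \<le> j \<Longrightarrow> j + 2 < p + L \<Longrightarrow> m j \<noteq> m (j + 2)"
  shows "2 * L \<le> sum m {p..<p + L} + 2"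
  using assms
proof (induction L arbitrary: p rule: less_induct)
  case (less L)
  have pair: "4 \<le> m j + m (j + 2)" if "p \<le> j" "j + 2 < p + L" for j
  proof -
    have "odd (m j)" "odd (m (j + 2))" "m j \<noteq> m (j + 2)"
      using that less.prems by simp_all
    then show ?thesis
      by presburger
  qed
  show ?case
  proof (cases "4 \<le> L")
    case True
    have "{p..<p + L} = {p..<p + 4} \<union> {p + 4..<p + 4 + (L - 4)}"
      using True by auto
    then have "sum m {p..<p + L} =
        (m p + m (p + 2)) + (m (p + 1) + m (p + 3)) + sum m {p + 4..<p + 4 + (L - 4)}"
      by (simp add: sum.union_disjoint ivl_disj_int numeral_eq_Suc)
    moreover have "2 * (L - 4) \<le> sum m {p + 4..<p + 4 + (L - 4)} + 2"
      using True less.prems by (intro less.IH) auto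
    moreover have "4 \<le> m p + m (p + 2)" "4 \<le> m (p + 1) + m (p + 3)"
      using pair[of p] pair[of "p + 1"] True by (simp_all add: numeral_eq_Suc)
    ultimately show ?thesis
      by linarith
  next
    case False
    then consider "L \<le> 1" | "L = 2" | "L = 3"
      by linarith
    then show ?thesis
    proof cases
      case 2
      then have "odd (m p)" "odd (m (p + 1))"
        using less.prems by simp_all
      then show ?thesis
        using 2 by (simp add: numeral_eq_Suc) presburger
    next
      case 3
      then show ?thesis
        using pair[of p] by (simp add: numeral_eq_Suc)
    qed auto
  qed
qed

lemma sum_odd_values_ge:
  fixes m :: "nat \<Rightarrow> nat"
  assumes alt: "\<And>j. 1 \<le> j \<Longrightarrow> j + 2 \<le> n \<Longrightarrow> m j \<noteq> m (j + 2)"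
    and convex: "\<And>i j k. i \<le> j \<Longrightarrow> j \<le> k \<Longrightarrow> odd (m i) \<Longrightarrow> odd (m k) \<Longrightarrow> odd (m j)"
  shows "2 * card {i \<in> {1..n}. odd (m i)} \<le> sum m {i \<in> {1..n}. odd (m i)} + 2"
proof -
  define Od where "Od = {i \<in> {1..n}. odd (m i)}"
  have "2 * card Od \<le> sum m Od + 2"
  proof (cases "Od = {}")
    case False
    define p where "p = Min Od"
    define q where "q = Max Od"
    have "finite Od"
      by (simp add: Od_def)
    then have pq: "p \<in> Od" "q \<in> Od" "Od \<subseteq> {p..q}"
      using False by (auto simp: p_def q_def)
    have Od_eq: "Od = {p..<p + (Suc q - p)}"
    proof (intro equalityI subsetI)
      fix j
      assume "j \<in> {p..<p + (Suc q - p)}"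
      then show "j \<in> Od"
        using pq convex[of p j q] by (auto simp: Od_def)
    qed (use pq in auto)
    have "2 * (Suc q - p) \<le> sum m {p..<p + (Suc q - p)} + 2"
    proof (rule sum_odd_alternating_ge)
      fix j
      assume "p \<le> j" "j < p + (Suc q - p)"
      then have "j \<in> Od"
        using Od_eq by simp
      then show "odd (m j)"
        by (simp add: Od_def)
    next
      fix j
      assume "p \<le> j" "j + 2 < p + (Suc q - p)"
      moreover have "1 \<le> p" "q \<le> n"
        using pq by (auto simp: Od_def)
      ultimately show "m j \<noteq> m (j + 2)"
        by (intro alt) linarith+
    qed
    then show ?thesis
      using Od_eq by simp
  qed simp
  then show ?thesis
    by (simp add: Od_def)
qed

lemma sum_ge_if_odd_interval_alternating:
  fixes m :: "nat \<Rightarrow> nat"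
  assumes alt: "\<And>j. 1 \<le> j \<Longrightarrow> j + 2 \<le> n \<Longrightarrow> m j \<noteq> m (j + 2)"
    and pos: "\<And>i. 3 \<le> i \<Longrightarrow> i + 2 \<le> n \<Longrightarrow> 0 < m i"
    and convex: "\<And>i j k. i \<le> j \<Longrightarrow> j \<le> k \<Longrightarrow> odd (m i) \<Longrightarrow> odd (m k) \<Longrightarrow> odd (m j)"
  shows "2 * n \<le> (\<Sum>i=1..n. m i) + 10"
proof -
  (* g i is what edge i has to contribute; only the odd values fall short, by at most 2 in total *)
  define g :: "nat \<Rightarrow> nat" where "g i = 2 * of_bool (3 \<le> i \<and> i + 2 \<le> n)" for i
  define Od where "Od = {i \<in> {1..n}. odd (m i)}"
  have "(\<Sum>i=1..n. g i) = (\<Sum>i\<in>{3..n - 2}. 2)"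
    unfolding g_def by (intro sum.mono_neutral_cong_right) auto
  then have g_total: "2 * n \<le> (\<Sum>i=1..n. g i) + 8"
    by simp
  have "sum g Od \<le> 2 * card Od"
    using sum_bounded_above[of Od g 2] by (simp add: g_def mult.commute)
  then have g_Od: "sum g Od \<le> sum m Od + 2"
    using sum_odd_values_ge[of n m, OF alt convex] unfolding Od_def by fastforce
  have g_rest: "sum g ({1..n} - Od) \<le> sum m ({1..n} - Od)"
  proof (intro sum_mono)
    fix i
    assume "i \<in> {1..n} - Od"
    then have "even (m i)"
      by (auto simp: Od_def)
    then show "g i \<le> m i"
      using pos[of i] by (auto simp: g_def)
  qed
  have "Od \<subseteq> {1..n}"
    by (auto simp: Od_def)
  then have "sum m {1..n} = sum m ({1..n} - Od) + sum m Od"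
    and "sum g {1..n} = sum g ({1..n} - Od) + sum g Od"
    by (simp_all add: sum.subset_diff)
  then show ?thesis
    using g_total g_Od g_rest by linarith
qed

lemma irregular_edge_counts_interior:
  assumes "irregular_edge_counts n m" "1 \<le> j" "j + 2 \<le> n"
  shows "m j \<noteq> m (j + 2)"
  using assms deg_path[of n j] deg_path[of n "Suc j"]
  unfolding irregular_edge_counts_def by (auto dest: spec[of _ j])

lemma edge_traversals_pos_if_irregular:
  assumes walk: "successively unit_step w"
    and irr: "irregular_edge_counts n (edge_traversals w)"
    and i: "3 \<le> i" "i + 2 \<le> n"
  shows "0 < edge_traversals w i"
proof (rule ccontr)
  assume "\<not> 0 < edge_traversals w i"
  then have zero: "edge_traversals w i = 0"
    by simp
  from edge_traversals_eq_0_imp_one_side[OF walk this]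
  show False
  proof
    assume "set w \<subseteq> {..<i}"
    then have "edge_traversals w (i + 2) = 0"
      using edge_traversals_pos_imp_mem[of w "i + 2"] by fastforce
    with zero irregular_edge_counts_interior[OF irr, of i] i show False
      by simp
  next
    assume "set w \<subseteq> {i..}"
    then have "edge_traversals w (i - 2) = 0"
      using edge_traversals_pos_imp_mem[of w "i - 2"] i by fastforce
    moreover have "i - 2 + 2 = i"
      using i by simp
    ultimately show False
      using zero irregular_edge_counts_interior[OF irr, of "i - 2"] i by fastforce
  qed
qed

lemma odd_edge_traversals_convex:
  assumes walk: "successively unit_step w" "w \<noteq> []"
    and ijk: "i \<le> j" "j \<le> k"
    and odd: "odd (edge_traversals w i)" "odd (edge_traversals w k)"
  shows "odd (edge_traversals w j)"
proof (rule ccontr)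
  let ?odd = "\<lambda>v. odd (edge_traversals w v)"
  assume even_j: "\<not> ?odd j"
  (* even (edge 0), odd, even, odd needs three parity flips, but they only occur at the ends of w *)
  have "successively (\<noteq>) w"
    using walk(1) by (rule successively_mono) (auto simp: unit_step_def)
  then have flip_at_end: "v = hd w \<or> v = last w" if "?odd v \<noteq> ?odd (Suc v)" for v
    using that walk walk_incidences_odd_imp_end walk_incidences_eq_edge_traversals by fastforce
  have "0 < i"
    using odd(1) by (auto intro: Nat.gr0I)
  moreover have "i < j" "j < k"
    using ijk odd even_j by (auto simp: le_less)
  ultimately obtain v1 v2 v3 where "v1 < i" "i \<le> v2" "v2 < j" "j \<le> v3" "v3 < k"
    and "?odd v1 \<noteq> ?odd (Suc v1)" "?odd v2 \<noteq> ?odd (Suc v2)" "?odd v3 \<noteq> ?odd (Suc v3)"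
    using exists_flip_between[of 0 i ?odd] exists_flip_between[of i j ?odd]
      exists_flip_between[of j k ?odd] odd even_j
    by (metis edge_traversals_0 even_zero)
  then have "v1 < v2" "v2 < v3" "v1 \<in> {hd w, last w}" "v2 \<in> {hd w, last w}" "v3 \<in> {hd w, last w}"
    using flip_at_end by auto
  then show False
    by auto
qed

lemma irregularising_path_length_ge:
  assumes n: "2 \<le> n" and irr: "irregularising (path_V n) (path_E n) w"
  shows "(if n = 2 then 0 else if n = 3 then 1 else if n \<in> {4, 5} then 2 else 2 * n - 10)
    \<le> walk_length w"
proof -
  define m where "m = edge_traversals w"
  have walk: "w \<noteq> []" "set w \<subseteq> {..n}" "successively unit_step w"
    and irr_m: "irregular_edge_counts n m"
    using irr by (simp_all add: irregularising_path_iff is_walk_path_iff m_def)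
  have alt: "m j \<noteq> m (j + 2)" if "1 \<le> j" "j + 2 \<le> n" for j
    using irregular_edge_counts_interior[OF irr_m that] .
  have len: "walk_length w = (\<Sum>i=1..n. m i)"
    using sum_edge_traversals[OF walk(3,2)] by (simp add: walk_length_def m_def)
  consider "n = 2" | "n = 3" | "n = 4 \<or> n = 5" | "6 \<le> n"
    using n by linarith
  then show ?thesis
  proof cases
    case 2
    then have "m 1 \<noteq> m 3"
      using alt[of 1] by (simp add: numeral_eq_Suc)
    then have "1 \<le> m 1 + m 3"
      by linarith
    also have "\<dots> \<le> (\<Sum>i=1..n. m i)"
      using 2 by (simp add: numeral_eq_Suc)
    finally show ?thesis
      using 2 len by simp
  next
    case 3
    then have "m 1 \<noteq> m 3" "m 2 \<noteq> m 4"
      using alt[of 1] alt[of 2] by (auto simp: numeral_eq_Suc)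
    then have "2 \<le> m 1 + m 2 + m 3 + m 4"
      by linarith
    also have "\<dots> = (\<Sum>i\<in>{1, 2, 3, 4}. m i)"
      by simp
    also have "\<dots> \<le> (\<Sum>i=1..n. m i)"
      using 3 by (intro sum_mono2) auto
    finally show ?thesis
      using 3 len by auto
  next
    case 4
    have "2 * n \<le> (\<Sum>i=1..n. m i) + 10"
    proof (rule sum_ge_if_odd_interval_alternating)
      show "m j \<noteq> m (j + 2)" if "1 \<le> j" "j + 2 \<le> n" for j
        using alt that .
      show "0 < m i" if "3 \<le> i" "i + 2 \<le> n" for i
        using edge_traversals_pos_if_irregular[OF walk(3) irr_m[unfolded m_def] that]
        by (simp add: m_def)
      show "odd (m j)" if "i \<le> j" "j \<le> k" "odd (m i)" "odd (m k)" for i j k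
        using odd_edge_traversals_convex[OF walk(3,1) that[unfolded m_def]] by (simp add: m_def)
    qed
    then show ?thesis
      using 4 len by simp
  qed simp
qed

fun zigzag_walk :: "nat \<Rightarrow> nat \<Rightarrow> nat list" where
  "zigzag_walk s 0 = [s, s + 1, s + 2]"
| "zigzag_walk s (Suc k) = zigzag_walk s k @
    [s + 4*k + 3, s + 4*k + 4, s + 4*k + 3, s + 4*k + 2,
     s + 4*k + 3, s + 4*k + 4, s + 4*k + 5, s + 4*k + 6]"

definition zigzag_counts :: "nat \<Rightarrow> nat \<Rightarrow> nat \<Rightarrow> nat" where
  "zigzag_counts s k i =
    (if s < i \<and> i \<le> s + 2 then 1
     else if s + 2 < i \<and> i \<le> s + 2 + 4*k then (if (i - s - 3) mod 4 < 2 then 3 else 1)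
     else 0)"

lemma zigzag_walk_simps [simp]:
  "zigzag_walk s k \<noteq> []"
  "hd (zigzag_walk s k) = s"
  "last (zigzag_walk s k) = s + 2 + 4*k"
  "length (zigzag_walk s k) = 3 + 8*k"
  by (induction k) auto

lemma set_zigzag_walk: "set (zigzag_walk s k) \<subseteq> {s..s + 2 + 4*k}"
  by (induction k) auto

lemma zigzag_walk_unit_steps: "successively unit_step (zigzag_walk s k)"
  by (induction k) (auto simp: successively_append_iff unit_step_def)

lemma zigzag_counts_Suc:
  "zigzag_counts s (Suc k) i = zigzag_counts s k i +
    (if i = s + 4*k + 3 \<or> i = s + 4*k + 4 then 3
     else if i = s + 4*k + 5 \<or> i = s + 4*k + 6 then 1 else 0)"
proof -
  have "i \<le> s + 2 + 4*k \<or> s + 6 + 4*k < i \<or> (\<exists>r<4. i = s + 3 + 4*k + r)"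
    by presburger
  then consider "i \<le> s + 2 + 4*k" | "s + 6 + 4*k < i" | r where "r < 4" "i = s + 3 + 4*k + r"
    by blast
  then show ?thesis
  proof cases
    case 3
    then have "(i - s - 3) mod 4 = r"
      by simp
    moreover have "r = 0 \<or> r = 1 \<or> r = 2 \<or> r = 3"
      using 3 by linarith
    ultimately show ?thesis
      using 3 unfolding zigzag_counts_def by auto
  qed (auto simp: zigzag_counts_def)
qed

lemma edge_traversals_zigzag_walk: "edge_traversals (zigzag_walk s k) = zigzag_counts s k"
proof
  fix i
  show "edge_traversals (zigzag_walk s k) i = zigzag_counts s k i"
  proof (induction k)
    case 0
    show ?case
      by (auto simp: zigzag_counts_def unit_step_def)
  next
    case (Suc k)
    have "edge_traversals (zigzag_walk s (Suc k)) i = zigzag_counts s k i +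
      edge_traversals [s + 4*k + 2, s + 4*k + 3, s + 4*k + 4, s + 4*k + 3, s + 4*k + 2,
        s + 4*k + 3, s + 4*k + 4, s + 4*k + 5, s + 4*k + 6] i"
      by (simp add: edge_traversals_append Suc)
    also have "\<dots> = zigzag_counts s (Suc k) i"
      by (auto simp: zigzag_counts_Suc unit_step_def)
    finally show ?case .
  qed
qed

lemma zigzag_counts_outside: "i \<le> s \<or> s + 2 + 4*k < i \<Longrightarrow> zigzag_counts s k i = 0"
  by (auto simp: zigzag_counts_def)

lemma zigzag_counts_ends:
  assumes "i \<in> {s + 1, s + 2, s + 1 + 4*k, s + 2 + 4*k}"
  shows "zigzag_counts s k i = 1"
proof (cases k)
  case (Suc j)
  then have "i \<le> s + 2 \<or> i - s - 3 = 4*j + 2 \<or> i - s - 3 = 4*j + 3"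
    using assms by auto
  moreover have "(4*j + 2) mod 4 = 2" "(4*j + 3) mod 4 = 3"
    by presburger+
  ultimately show ?thesis
    using assms Suc by (auto simp: zigzag_counts_def)
qed (use assms in \<open>auto simp: zigzag_counts_def\<close>)

lemma mod_4_add_2_less_2_iff: "(x + 2) mod 4 < 2 \<longleftrightarrow> \<not> x mod 4 < (2::nat)"
  by arith

lemma zigzag_counts_alternate:
  assumes "s < i" "i + 2 \<le> s + 2 + 4*k"
  shows "zigzag_counts s k i \<noteq> zigzag_counts s k (i + 2)"
proof (cases "i \<le> s + 2")
  case False
  then have "i + 2 - s - 3 = (i - s - 3) + 2"
    by simp
  then show ?thesis
    using assms False mod_4_add_2_less_2_iff[of "i - s - 3"] by (auto simp: zigzag_counts_def)
qed (use assms in \<open>auto simp: zigzag_counts_def\<close>)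

lemma irregular_edge_counts_path_6_4k:
  "irregular_edge_counts (6 + 4*k) (zigzag_counts 2 k)"
    (is "irregular_edge_counts ?n ?m")
  unfolding irregular_edge_counts_def
proof (intro allI impI)
  fix v
  assume "v < ?n"
  then consider "3 \<le> v \<and> v + 2 \<le> 4 + 4*k"
    | "v = 0 \<or> v = 1 \<or> v = 2 \<or> v = 3 + 4*k \<or> v = 4 + 4*k \<or> v = 5 + 4*k"
    by linarith
  then show "deg (path_V ?n) (path_E ?n) v + ?m v \<noteq>
      deg (path_V ?n) (path_E ?n) (Suc v) + ?m (Suc (Suc v))"
  proof cases
    case 1
    then show ?thesis
      using zigzag_counts_alternate[of 2 v k] by (simp add: deg_path)
  next
    case 2
    then show ?thesis
      by (auto simp: deg_path zigzag_counts_outside zigzag_counts_ends)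
  qed
qed

lemma irregular_edge_counts_path_7_4k:
  "irregular_edge_counts (7 + 4*k) 
    (\<lambda>i. zigzag_counts 2 k i + (if i = 5 + 4*k then 2 else 0))"
    (is "irregular_edge_counts ?n ?m")
  unfolding irregular_edge_counts_def
proof (intro allI impI)
  fix v
  assume "v < ?n"
  then consider "3 \<le> v \<and> v + 2 \<le> 4 + 4*k"
    | "v = 0 \<or> v = 1 \<or> v = 2 \<or> v = 3 + 4*k \<or> v = 4 + 4*k \<or> v = 5 + 4*k \<or> v = 6 + 4*k"
    by linarith
  then show "deg (path_V ?n) (path_E ?n) v + ?m v \<noteq>
      deg (path_V ?n) (path_E ?n) (Suc v) + ?m (Suc (Suc v))"
  proof cases
    case 1
    then show ?thesis
      using zigzag_counts_alternate[of 2 v k] by (simp add: deg_path)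
  next
    case 2
    then show ?thesis
      by (auto simp: deg_path zigzag_counts_outside zigzag_counts_ends)
  qed
qed

lemma irregular_edge_counts_path_8_4k:
  "irregular_edge_counts (8 + 4*k) 
    (\<lambda>i. zigzag_counts 2 k i + (if i = 5 + 4*k \<or> i = 6 + 4*k then 2 else 0))"
    (is "irregular_edge_counts ?n ?m")
  unfolding irregular_edge_counts_def
proof (intro allI impI)
  fix v
  assume "v < ?n"
  then consider "3 \<le> v \<and> v + 2 \<le> 4 + 4*k"
    | "v = 0 \<or> v = 1 \<or> v = 2 \<or> v = 3 + 4*k \<or> v = 4 + 4*k \<or> v = 5 + 4*k \<or> v = 6 + 4*k \<or> v = 7 + 4*k"
    by linarith
  then show "deg (path_V ?n) (path_E ?n) v + ?m v \<noteq>
      deg (path_V ?n) (path_E ?n) (Suc v) + ?m (Suc (Suc v))"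
  proof cases
    case 1
    then show ?thesis
      using zigzag_counts_alternate[of 2 v k] by (simp add: deg_path)
  next
    case 2
    then show ?thesis
      by (auto simp: deg_path zigzag_counts_outside zigzag_counts_ends)
  qed
qed

lemma irregular_edge_counts_path_9_4k:
  "irregular_edge_counts (9 + 4*k) 
    (\<lambda>i. zigzag_counts 3 k i + (if i = 3 \<or> i = 6 + 4*k \<or> i = 7 + 4*k then 2 else 0))"
    (is "irregular_edge_counts ?n ?m")
  unfolding irregular_edge_counts_def
proof (intro allI impI)
  fix v
  assume "v < ?n"
  then consider "4 \<le> v \<and> v + 2 \<le> 5 + 4*k"
    | "v = 0 \<or> v = 1 \<or> v = 2 \<or> v = 3 \<or> v = 4 + 4*k \<or> v = 5 + 4*k \<or> v = 6 + 4*k \<or> v = 7 + 4*k \<or> v = 8 + 4*k"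
    by linarith
  then show "deg (path_V ?n) (path_E ?n) v + ?m v \<noteq>
      deg (path_V ?n) (path_E ?n) (Suc v) + ?m (Suc (Suc v))"
  proof cases
    case 1
    then show ?thesis
      using zigzag_counts_alternate[of 3 v k] by (simp add: deg_path)
  next
    case 2
    then show ?thesis
      by (auto simp: deg_path zigzag_counts_outside zigzag_counts_ends)
  qed
qed

lemma irregularising_path_6_4k:
  "irregularising (path_V (6 + 4*k)) (path_E (6 + 4*k)) (zigzag_walk 2 k)"
  using set_zigzag_walk[of 2 k] irregular_edge_counts_path_6_4k[of k]
  by (intro irregularising_pathI[OF _ _ zigzag_walk_unit_steps edge_traversals_zigzag_walk]) auto

lemma irregularising_path_7_4k:
  "irregularising (path_V (7 + 4*k)) (path_E (7 + 4*k)) (zigzag_walk 2 k @ [5 + 4*k, 4 + 4*k])"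
    (is "irregularising _ _ ?w")
proof (rule irregularising_pathI)
  show "set ?w \<subseteq> {..7 + 4*k}"
    using set_zigzag_walk[of 2 k] by auto
  show "successively unit_step ?w"
    using zigzag_walk_unit_steps[of 2 k] by (simp add: successively_append_iff unit_step_def)
  show "edge_traversals ?w = (\<lambda>i. zigzag_counts 2 k i + (if i = 5 + 4*k then 2 else 0))"
    by (auto simp: edge_traversals_append edge_traversals_zigzag_walk unit_step_def)
qed (simp_all add: irregular_edge_counts_path_7_4k)

lemma irregularising_path_8_4k:
  "irregularising (path_V (8 + 4*k)) (path_E (8 + 4*k))
    (zigzag_walk 2 k @ [5 + 4*k, 6 + 4*k, 5 + 4*k, 4 + 4*k])"
    (is "irregularising _ _ ?w")
proof (rule irregularising_pathI)
  show "set ?w \<subseteq> {..8 + 4*k}"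
    using set_zigzag_walk[of 2 k] by auto
  show "successively unit_step ?w"
    using zigzag_walk_unit_steps[of 2 k] by (simp add: successively_append_iff unit_step_def)
  show "edge_traversals ?w =
      (\<lambda>i. zigzag_counts 2 k i + (if i = 5 + 4*k \<or> i = 6 + 4*k then 2 else 0))"
    by (auto simp: edge_traversals_append edge_traversals_zigzag_walk unit_step_def)
qed (simp_all add: irregular_edge_counts_path_8_4k)

lemma irregularising_path_9_4k:
  "irregularising (path_V (9 + 4*k)) (path_E (9 + 4*k))
    (3 # 2 # zigzag_walk 3 k @ [6 + 4*k, 7 + 4*k, 6 + 4*k, 5 + 4*k])"
    (is "irregularising _ _ ?w")
proof (rule irregularising_pathI)
  show "set ?w \<subseteq> {..9 + 4*k}"
    using set_zigzag_walk[of 3 k] by auto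
  show "successively unit_step ?w"
    using zigzag_walk_unit_steps[of 3 k]
    by (simp add: successively_append_iff successively_Cons unit_step_def)
  show "edge_traversals ?w =
      (\<lambda>i. zigzag_counts 3 k i + (if i = 3 \<or> i = 6 + 4*k \<or> i = 7 + 4*k then 2 else 0))"
    by (auto simp: edge_traversals_Cons edge_traversals_append edge_traversals_zigzag_walk
        unit_step_def)
qed (simp_all add: irregular_edge_counts_path_9_4k)

lemma irregularising_path_exists_ge_6:
  assumes "6 \<le> n"
  shows "\<exists>w. irregularising (path_V n) (path_E n) w \<and> walk_length w = 2 * n - 10"
proof -
  define k where "k = (n - 6) div 4"
  have "n = 6 + 4*k + (n - 6) mod 4" "(n - 6) mod 4 < 4"
    using assms by (simp_all add: k_def)
  then consider "n = 6 + 4*k" | "n = 7 + 4*k" | "n = 8 + 4*k" | "n = 9 + 4*k"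
    by linarith
  then show ?thesis
    using irregularising_path_6_4k irregularising_path_7_4k irregularising_path_8_4k
      irregularising_path_9_4k
    by cases (fastforce simp: walk_length_def)+
qed

lemma irregularising_path_small:
  "irregularising (path_V 2) (path_E 2) [0]"
  "irregularising (path_V 3) (path_E 3) [2, 3]"
  "irregularising (path_V 4) (path_E 4) [2, 3, 4]"
  "irregularising (path_V 5) (path_E 5) [2, 3, 4]"
  by (auto simp: irregularising_path_iff is_walk_path_iff irregular_edge_counts_def deg_path
      unit_step_def less_Suc_eq numeral_eq_Suc)

lemma irregularising_path_exists:
  assumes "2 \<le> n"
  shows "\<exists>w. irregularising (path_V n) (path_E n) w \<and>
    walk_length w = (if n = 2 then 0 else if n = 3 then 1 else if n \<in> {4, 5} then 2 else 2 * n - 10)"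
proof -
  consider "n = 2" | "n = 3" | "n = 4 \<or> n = 5" | "6 \<le> n"
    using assms by linarith
  then show ?thesis
  proof cases
    case 1
    then show ?thesis
      using irregularising_path_small(1) by (auto simp: walk_length_def)
  next
    case 2
    then show ?thesis
      using irregularising_path_small(2) by (auto simp: walk_length_def)
  next
    case 3
    then show ?thesis
      using irregularising_path_small(3,4) by (auto simp: walk_length_def)
  next
    case 4
    then show ?thesis
      using irregularising_path_exists_ge_6 by auto
  qed
qed

theorem theorem5p5:
  fixes n :: nat
  assumes "n \<ge> 2"
  shows "min_irreg_walk_length (path_V n) (path_E n) =
           (if n = 2 then 0 else if n = 3 then 1 else if n \<in> {4, 5} then 2 else 2 * n - 10)"
  unfolding min_irreg_walk_length_def
proof (rule Least_equality)
  show "\<exists>w. irregularising (path_V n) (path_E n) w \<and>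
      walk_length w = (if n = 2 then 0 else if n = 3 then 1 else if n \<in> {4, 5} then 2 else 2 * n - 10)"
    using irregularising_path_exists[OF assms] .
next
  fix p
  assume "\<exists>w. irregularising (path_V n) (path_E n) w \<and> walk_length w = p"
  then show "(if n = 2 then 0 else if n = 3 then 1 else if n \<in> {4, 5} then 2 else 2 * n - 10) \<le> p"
    using irregularising_path_length_ge[OF assms] by blast
qed

end
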